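(* Let $a,b\in\mathbb{R}$ with $a,b,a+b\notin\mathbb{Z}$, $a-b\in\mathbb{Z}$, and let $\check T=T(a,b)$. Its index sets are $\check I_1=\check I_2=\mathbb{N}_0$, $\check I_3=\check I_{3-}\sqcup\check I_{3+}$, $\check I_4=\check I_{4-}\sqcup\check I_{4+}$, where $\check I_{3-}=\{n\in\mathbb{N}_0:2n-a+b<0\}$, $\check I_{3+}=\{n\in\mathbb{N}_0:n-a+b\ge0\}$, $\check I_{4-}=\{n\in\mathbb{N}_0:2n+a-b<0\}$, $\check I_{4+}=\{n\in\mathbb{N}_0:n+a-b\ge0\}$. The type 1 and type 2 eigenvalues are all simple; the eigenvalues in $\check\sigma_{3-}$ and $\check\sigma_{4-}$ are simple; the remaining type 3 and 4 eigenvalues are degenerate with $\check\sigma_{34}:=\check\sigma_{3+}=\check\sigma_{4+}$, and for $\lambda\in\check\sigma_{34}$ the set $\mathrm{Ric}_\lambda(\check T)$ has exactly two elements, of types 3 and 4. If $a\ge b$ then $\sigma_{\mathrm{qr}}(\check T)=\check\sigma_1\sqcup\check\sigma_2\sqcup\check\sigma_{3-}\sqcup\check\sigma_{34}$ with labels (single type 1), (single type 2), (single type 3), (two, types 3 and 4) respectively; if $b\ge a$ then $\sigma_{\mathrm{qr}}(\check T)=\check\sigma_1\sqcup\check\sigma_2\sqcup\check\sigma_{4-}\sqcup\check\sigma_{34}$ with labels (single type 1), (single type 2), (single type 4), (two, types 3 and 4).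
   Context: $D=d/dx$; $T(a,b)=(x^2-1)\big(D^2+(\frac{a+1}{x-1}+\frac{b+1}{x+1})D\big)$. For $T=pD^2+qD+r$, $\mathrm{Ric}_\lambda(T)$ is the set of rational $w$ with $p(w'+w^2)+qw+r=\lambda$ (log-derivatives of quasi-rational eigenfunctions $\phi$ with $T\phi=\lambda\phi$), $\sigma_{\mathrm{qr}}(T)=\{\lambda:\mathrm{Ric}_\lambda(T)\neq\emptyset\}$; $\lambda$ is simple if $\mathrm{Ric}_\lambda(T)$ is a singleton. Asymptotic type of $w=\phi'/\phi$: 1 if regular at $x=\pm1$, 2 if poles at both, 3 if pole at $x=1$ only, 4 if pole at $x=-1$ only. Degree $\deg\phi=\lim_{x\to\infty}xw(x)$; index of a type $\imath$ eigenfunction is $\deg\phi-d_\imath$, $d_1=0,d_2=-a-b,d_3=-a,d_4=-b$; $\check I_\imath$ is the set of indices of type $\imath$ eigenfunctions. $\check\sigma_\imath=\lambda_\imath(\check I_\imath;a,b)$, $\check\sigma_{\imath\pm}=\lambda_\imath(\check I_{\imath\pm};a,b)$, with $\lambda_1(k;a,b)=k(k+a+b+1)$, $\lambda_2(k;a,b)=(k-a-b)(k+1)$, $\lambda_3(k;a,b)=(k-a)(k+b+1)$, $\lambda_4(k;a,b)=(k-b)(k+a+1)$. *)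

theory Defs
  imports Complex_Main "HOL-Computational_Algebra.Polynomial" "HOL-Computational_Algebra.Fraction_Field"
begin

text \<open>The operator T(a,b) = p D^2 + q D + r with p = x^2 - 1,
  q = (x^2-1)((a+1)/(x-1) + (b+1)/(x+1)) = (a+b+2) x + (a-b), r = 0.\<close>

definition T_p :: "real poly" where "T_p = [:-1, 0, 1:]"
definition T_q :: "real \<Rightarrow> real \<Rightarrow> real poly" where "T_q a b = [:a - b, a + b + 2:]"
definition T_r :: "real poly" where "T_r = 0"

text \<open>w = P/Q satisfies p(w' + w^2) + q w + r = lambda, written after multiplying by Q^2
  (independent of the chosen representation).\<close>
definition Ric :: "real \<Rightarrow> real \<Rightarrow> real \<Rightarrow> real poly fract set" where
  "Ric a b lam = {w. \<exists>P Q. Q \<noteq> 0 \<and> w = Fract P Q \<and>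
      T_p * (pderiv P * Q - P * pderiv Q + P ^ 2) + T_q a b * P * Q + T_r * Q ^ 2
        = smult lam (Q ^ 2)}"

definition sigma_qr :: "real \<Rightarrow> real \<Rightarrow> real set" where
  "sigma_qr a b = {lam. Ric a b lam \<noteq> {}}"

definition regular_at :: "real poly fract \<Rightarrow> real \<Rightarrow> bool" where
  "regular_at w x0 \<longleftrightarrow> (\<exists>P Q. Q \<noteq> 0 \<and> w = Fract P Q \<and> poly Q x0 \<noteq> 0)"

definition asym_type :: "real poly fract \<Rightarrow> nat" where
  "asym_type w =
     (if regular_at w 1 \<and> regular_at w (-1) then 1
      else if \<not> regular_at w 1 \<and> \<not> regular_at w (-1) then 2
      else if \<not> regular_at w 1 then 3 else 4)"

text \<open>deg phi = lim_{x \<rightarrow> \<infinity>} x w(x).\<close>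
definition has_degree :: "real poly fract \<Rightarrow> real \<Rightarrow> bool" where
  "has_degree w d \<longleftrightarrow> (\<exists>P Q. Q \<noteq> 0 \<and> w = Fract P Q \<and>
      ((\<lambda>x. x * poly P x / poly Q x) \<longlongrightarrow> d) at_top)"

definition d_type :: "nat \<Rightarrow> real \<Rightarrow> real \<Rightarrow> real" where
  "d_type i a b = (if i = 1 then 0 else if i = 2 then -a-b else if i = 3 then -a else -b)"

definition index_set :: "nat \<Rightarrow> real \<Rightarrow> real \<Rightarrow> real set" where
  "index_set i a b = {k. \<exists>lam w. w \<in> Ric a b lam \<and> asym_type w = i \<and>
       has_degree w (k + d_type i a b)}"

definition lam_type :: "nat \<Rightarrow> real \<Rightarrow> real \<Rightarrow> real \<Rightarrow> real" where
  "lam_type i k a b = (if i = 1 then k * (k + a + b + 1)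
     else if i = 2 then (k - a - b) * (k + 1)
     else if i = 3 then (k - a) * (k + b + 1)
     else (k - b) * (k + a + 1))"

definition N0 :: "real set" where "N0 = {k. \<exists>n::nat. k = real n}"

definition I3m :: "real \<Rightarrow> real \<Rightarrow> real set" where
  "I3m a b = {k \<in> N0. 2 * k - a + b < 0}"
definition I3p :: "real \<Rightarrow> real \<Rightarrow> real set" where
  "I3p a b = {k \<in> N0. k - a + b \<ge> 0}"
definition I4m :: "real \<Rightarrow> real \<Rightarrow> real set" where
  "I4m a b = {k \<in> N0. 2 * k + a - b < 0}"
definition I4p :: "real \<Rightarrow> real \<Rightarrow> real set" where
  "I4p a b = {k \<in> N0. k + a - b \<ge> 0}"

definition sigma_of :: "nat \<Rightarrow> real set \<Rightarrow> real \<Rightarrow> real \<Rightarrow> real set" where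
  "sigma_of i I a b = (\<lambda>k. lam_type i k a b) ` I"

definition sigma_type :: "nat \<Rightarrow> real \<Rightarrow> real \<Rightarrow> real set" where
  "sigma_type i a b = sigma_of i (index_set i a b) a b"

end

(*
  A rational solution w of the Riccati equation of T(a, b) has at worst simple poles at x = 1
  and x = -1, with residue 0 or -a at 1 and 0 or -b at -1; which residues occur is the
  asymptotic type. Subtracting alpha/(x - 1) + beta/(x + 1) for these residues gauges T(a, b)
  into a Jacobi operator T(A, B) with A = +-a, B = +-b and leaves a solution regular at both
  points, hence the logarithmic derivative y'/y of a polynomial eigenfunction y. Since the
  parameters A, B are not integers, such y is unique up to a factor, nonzero at x = 1 and
  x = -1, and exists in degree n iff n + k + 1 differs from -(A + B) for all k < n. This gives
  the index sets, and shows that a solution is determined by its eigenvalue and type.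
  With s = k + d_i the type-i eigenvalue is s (s + a + b + 1), so eigenvalues of two types can
  only agree if s = s' or s + s' = -(a + b + 1); as a, b, a + b are not integers this happens
  only between types 3 and 4, for k - a = k' - b, which makes sigma_3+ = sigma_4+ the
  degenerate part of the spectrum.
*)
theory Submission
  imports Defs "HOL-Computational_Algebra.Polynomial_Factorial"
    "HOL-Computational_Algebra.Field_as_Ring" "HOL-Computational_Algebra.Normalized_Fraction"
begin

section \<open>Rational solutions of the Riccati equation and their poles\<close>

lemma real_poly_eqI: "(\<And>x. poly p x = poly q x) \<Longrightarrow> p = (q :: real poly)"
  using poly_eq_poly_eq_iff[of p q] by blast

definition riccati_residual :: "real \<Rightarrow> real \<Rightarrow> real \<Rightarrow> real poly \<Rightarrow> real poly \<Rightarrow> real poly" where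
  "riccati_residual a b lam P Q =
     T_p * (pderiv P * Q - P * pderiv Q + P ^ 2) + T_q a b * P * Q + T_r * Q ^ 2 - smult lam (Q ^ 2)"

lemma riccati_residual_mult_mult:
  "riccati_residual a b lam (P * R) (Q * R) = R ^ 2 * riccati_residual a b lam P Q"
  by (rule real_poly_eqI)
    (simp add: riccati_residual_def pderiv_mult T_p_def T_q_def T_r_def; algebra)

lemma Fract_mem_Ric_iff:
  assumes "Q \<noteq> 0"
  shows "Fract P Q \<in> Ric a b lam \<longleftrightarrow> riccati_residual a b lam P Q = 0"
proof
  assume "Fract P Q \<in> Ric a b lam"
  then obtain P1 Q1 where Q1: "Q1 \<noteq> 0" "Fract P Q = Fract P1 Q1"
    and res1: "riccati_residual a b lam P1 Q1 = 0"
    unfolding Ric_def riccati_residual_def by auto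
  have cross: "P * Q1 = P1 * Q" using Q1 assms by (simp add: eq_fract)
  have "Q1 ^ 2 * riccati_residual a b lam P Q = Q ^ 2 * riccati_residual a b lam P1 Q1"
    using riccati_residual_mult_mult[of a b lam P Q1 Q] riccati_residual_mult_mult[of a b lam P1 Q Q1]
    by (simp add: cross mult.commute)
  then show "riccati_residual a b lam P Q = 0" using res1 Q1(1) by simp
next
  assume "riccati_residual a b lam P Q = 0"
  then show "Fract P Q \<in> Ric a b lam"
    using assms unfolding Ric_def riccati_residual_def by auto
qed

lemma riccati_residual_split:
  "riccati_residual a b lam P Q
     = T_p * P * (P - pderiv Q) - Q * (smult lam Q - T_q a b * P - T_p * pderiv P)"
  by (rule real_poly_eqI) (simp add: riccati_residual_def T_p_def T_q_def T_r_def; algebra)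

lemma ex_coprime_Fract: "\<exists>P Q. Q \<noteq> 0 \<and> coprime P Q \<and> w = Fract P (Q :: real poly)"
  by (intro exI[of _ "fst (quot_of_fract w)"] exI[of _ "snd (quot_of_fract w)"])
    (simp add: coprime_quot_of_fract)

lemma regular_at_Fract: "Q \<noteq> 0 \<Longrightarrow> poly Q c \<noteq> 0 \<Longrightarrow> regular_at (Fract P Q) c"
  unfolding regular_at_def by blast

lemma regular_at_Fract_coprime_iff:
  assumes "Q \<noteq> 0" "coprime P Q"
  shows "regular_at (Fract P Q) c \<longleftrightarrow> poly Q c \<noteq> 0"
proof
  assume "regular_at (Fract P Q) c"
  then obtain P1 Q1 where Q1: "Q1 \<noteq> 0" "Fract P Q = Fract P1 Q1" "poly Q1 c \<noteq> 0"
    unfolding regular_at_def by auto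
  then have "poly P c * poly Q1 c = poly P1 c * poly Q c"
    using assms(1) by (simp add: eq_fract flip: poly_mult)
  then show "poly Q c \<noteq> 0"
    using Q1(3) coprime_poly_0[OF assms(2)] by auto
qed (use assms regular_at_Fract in blast)

lemma regular_at_add:
  assumes "regular_at w c" "regular_at z c"
  shows "regular_at (w + z) c"
proof -
  obtain P Q P1 Q1 where "Q \<noteq> 0" "w = Fract P Q" "poly Q c \<noteq> 0"
    and "Q1 \<noteq> 0" "z = Fract P1 Q1" "poly Q1 c \<noteq> 0"
    using assms unfolding regular_at_def by auto
  then show ?thesis using regular_at_Fract[of "Q * Q1" c] by simp
qed

lemma regular_at_uminus: "regular_at w c \<Longrightarrow> regular_at (- w) c"
  unfolding regular_at_def by force

lemma regular_at_diff: "regular_at w c \<Longrightarrow> regular_at z c \<Longrightarrow> regular_at (w - z) c"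
  using regular_at_add[of w c "- z"] regular_at_uminus[of z c] by simp

lemma regular_at_add_right_iff: "regular_at z c \<Longrightarrow> regular_at (w + z) c \<longleftrightarrow> regular_at w c"
  using regular_at_add regular_at_diff[of "w + z" c z] by auto

lemma regular_at_const_over_linear_iff:
  "regular_at (Fract [:r:] [:d, 1:]) c \<longleftrightarrow> r = 0 \<or> c + d \<noteq> 0"
proof (cases "r = 0")
  case True
  then show ?thesis using regular_at_Fract[of 1 c 0] by (simp add: fract_collapse)
next
  case False
  then have "coprime [:r:] [:d, 1:]"
    by (intro is_unit_left_imp_coprime) (simp add: is_unit_const_poly_iff dvd_field_iff)
  then show ?thesis using False by (subst regular_at_Fract_coprime_iff) auto
qed

lemma T_p_factor: "c * c = 1 \<Longrightarrow> T_p = [:-c, 1:] * [:c, 1:]"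
  by (simp add: T_p_def)

lemma riccati_no_double_pole:
  assumes "c * c = 1" and res: "riccati_residual a b lam P Q = 0" and "coprime P Q"
  shows "\<not> [:-c, 1:] ^ 2 dvd Q"
proof
  assume "[:-c, 1:] ^ 2 dvd Q"
  then obtain R where "Q = [:-c, 1:] ^ 2 * R" by blast
  then have Q: "Q = [:-c, 1:] * ([:-c, 1:] * R)" by (simp only: power2_eq_square mult.assoc)
  define S where "S = smult lam Q - T_q a b * P - T_p * pderiv P"
  have "[:-c, 1:] * ([:c, 1:] * P * (P - pderiv Q)) = T_p * P * (P - pderiv Q)"
    by (simp only: T_p_factor[OF assms(1)] mult_ac)
  also have "\<dots> = Q * S" using res unfolding riccati_residual_split S_def by simp
  also have "\<dots> = [:-c, 1:] * ([:-c, 1:] * R * S)" by (simp only: Q mult_ac)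
  finally have "[:c, 1:] * P * (P - pderiv Q) = [:-c, 1:] * R * S"
    by (metis mult_cancel_left pCons_eq_0_iff zero_neq_one)
  then have "poly ([:c, 1:] * P * (P - pderiv Q)) c = 0" by simp
  moreover have "poly (pderiv Q) c = 0" unfolding Q pderiv_mult by simp
  ultimately have "poly P c = 0" using assms(1) by auto
  moreover have "poly Q c = 0" by (simp add: Q)
  ultimately show False using coprime_poly_0[OF assms(3)] by blast
qed

text \<open>The exponent e is a at c = 1 and b at c = -1; the residue of a solution at a simple
  pole c is then -e.\<close>
lemma riccati_residue:
  assumes "c * c = 1" "2 * e = (a - b) * c + a + b"
    and res: "riccati_residual a b lam P ([:-c, 1:] * Q) = 0"
  shows "poly P c * (poly P c + e * poly Q c) = 0"
proof -
  define F where "F = [:c, 1:] * (pderiv P * ([:-c, 1:] * Q) - P * (Q + [:-c, 1:] * pderiv Q) + P ^ 2)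
    + T_q a b * P * Q - smult lam ([:-c, 1:] * Q ^ 2)"
  have "riccati_residual a b lam P ([:-c, 1:] * Q) = [:-c, 1:] * F"
    unfolding T_p_factor[OF assms(1)] riccati_residual_def
    by (rule real_poly_eqI)
      (simp add: F_def pderiv_mult pderiv_add pderiv_diff pderiv_smult pderiv_pCons T_r_def; algebra)
  then have "F = 0" using res by (metis mult_eq_0_iff pCons_eq_0_iff zero_neq_one)
  moreover have "poly F c = 2 * c * (poly P c * (poly P c + e * poly Q c))"
    using assms(1,2) unfolding F_def T_q_def by simp algebra
  ultimately show ?thesis using assms(1) by auto
qed

lemma Ric_simple_pole:
  assumes "c * c = 1" "2 * e = (a - b) * c + a + b" and w: "w \<in> Ric a b lam"
  shows "regular_at w c \<or> regular_at (w + Fract [:e:] [:-c, 1:]) c"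
proof -
  obtain P Q where PQ: "Q \<noteq> 0" "coprime P Q" "w = Fract P Q" using ex_coprime_Fract by blast
  have res: "riccati_residual a b lam P Q = 0" using w PQ Fract_mem_Ric_iff by blast
  show ?thesis
  proof (cases "poly Q c = 0")
    case False
    then show ?thesis using PQ regular_at_Fract by blast
  next
    case True
    then obtain Q1 where Q1: "Q = [:-c, 1:] * Q1" by (metis dvdE poly_eq_0_iff_dvd)
    have "Q1 \<noteq> 0" using PQ(1) Q1 by auto
    have "poly Q1 c \<noteq> 0"
    proof
      assume "poly Q1 c = 0"
      then obtain Q2 where "Q1 = [:-c, 1:] * Q2" by (metis dvdE poly_eq_0_iff_dvd)
      then have "Q = [:-c, 1:] ^ 2 * Q2" by (simp only: Q1 power2_eq_square mult.assoc)
      then show False using riccati_no_double_pole[OF assms(1) res PQ(2)] by (metis dvd_triv_left)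
    qed
    have "poly P c \<noteq> 0" using coprime_poly_0[OF PQ(2)] True by blast
    then have "poly (P + [:e:] * Q1) c = 0"
      using riccati_residue[OF assms(1,2), of lam P Q1] res Q1 by simp
    then obtain R where R: "P + [:e:] * Q1 = [:-c, 1:] * R"
      by (metis dvdE poly_eq_0_iff_dvd)
    have X: "[:-c, 1:] \<noteq> 0" by simp
    have "w + Fract [:e:] [:-c, 1:] = Fract (P * [:-c, 1:] + [:e:] * Q) (Q * [:-c, 1:])"
      unfolding PQ(3) by (rule add_fract[OF PQ(1) X])
    also have "P * [:-c, 1:] + [:e:] * Q = [:-c, 1:] * ([:-c, 1:] * R)"
      using R unfolding Q1 by algebra
    also have "Q * [:-c, 1:] = [:-c, 1:] * ([:-c, 1:] * Q1)" by (simp only: Q1 mult_ac)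
    also have "Fract ([:-c, 1:] * ([:-c, 1:] * R)) ([:-c, 1:] * ([:-c, 1:] * Q1)) = Fract R Q1"
      by (simp only: mult_fract_cancel[OF X])
    finally show ?thesis using regular_at_Fract[OF \<open>Q1 \<noteq> 0\<close> \<open>poly Q1 c \<noteq> 0\<close>] by simp
  qed
qed

section \<open>Polynomial eigenfunctions of the Jacobi operator\<close>

definition jacobi_op :: "real \<Rightarrow> real \<Rightarrow> real poly \<Rightarrow> real poly" where
  "jacobi_op A B y = T_p * pderiv (pderiv y) + T_q A B * pderiv y"

definition jacobi_eigenvalue :: "real \<Rightarrow> real \<Rightarrow> nat \<Rightarrow> real" where
  "jacobi_eigenvalue A B n = real n * (real n + A + B + 1)"

definition jacobi_eigenpoly :: "real \<Rightarrow> real \<Rightarrow> real poly \<Rightarrow> bool" where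
  "jacobi_eigenpoly A B y \<longleftrightarrow>
     y \<noteq> 0 \<and> jacobi_op A B y = smult (jacobi_eigenvalue A B (degree y)) y"

lemma riccati_residual_log_deriv:
  "riccati_residual A B mu (pderiv y) y = y * (jacobi_op A B y - smult mu y)"
  by (rule real_poly_eqI) (simp add: riccati_residual_def jacobi_op_def T_r_def; algebra)

lemma log_deriv_mem_Ric_iff:
  assumes "y \<noteq> 0"
  shows "Fract (pderiv y) y \<in> Ric A B mu \<longleftrightarrow> jacobi_op A B y = smult mu y"
  using assms by (simp add: Fract_mem_Ric_iff riccati_residual_log_deriv)

lemma jacobi_op_diff: "jacobi_op A B (p - smult k q) = jacobi_op A B p - smult k (jacobi_op A B q)"
  by (simp add: jacobi_op_def pderiv_diff pderiv_smult algebra_simps smult_add_right)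

text \<open>In the Taylor coefficients z_j of y at x = c (the coefficients of pcompose y [:c, 1:]),
  where c = 1 or c = -1, the Jacobi operator is upper bidiagonal, with the eigenvalues
  jacobi_eigenvalue A B j on the diagonal and jacobi_recurrence_coeff c A B j above it.\<close>
definition jacobi_recurrence_coeff :: "real \<Rightarrow> real \<Rightarrow> real \<Rightarrow> nat \<Rightarrow> real" where
  "jacobi_recurrence_coeff c A B j = (real j + 1) * (2 * c * real j + (A + B + 2) * c + A - B)"

lemma jacobi_op_taylor_coeff:
  assumes "c * c = 1"
  shows "coeff (pcompose (jacobi_op A B y) [:c, 1:]) j =
    jacobi_eigenvalue A B j * coeff (pcompose y [:c, 1:]) j
    + jacobi_recurrence_coeff c A B j * coeff (pcompose y [:c, 1:]) (Suc j)"
proof -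
  define z where "z = pcompose y [:c, 1:]"
  have shift_pderiv: "pcompose (pderiv p) [:c, 1:] = pderiv (pcompose p [:c, 1:])" for p :: "real poly"
    by (simp add: pderiv_pcompose pderiv_pCons)
  have "pcompose T_p [:c, 1:] = [:0, 2 * c, 1:]" using assms
    by (simp add: T_p_def pcompose_pCons algebra_simps)
  moreover have "pcompose (T_q A B) [:c, 1:] = [:(A - B) + (A + B + 2) * c, A + B + 2:]"
    by (simp add: T_q_def pcompose_pCons algebra_simps)
  ultimately have "pcompose (jacobi_op A B y) [:c, 1:] =
     pCons 0 (smult (2 * c) (pderiv (pderiv z)) + pCons 0 (pderiv (pderiv z)))
     + (smult ((A - B) + (A + B + 2) * c) (pderiv z) + pCons 0 (smult (A + B + 2) (pderiv z)))"
    unfolding jacobi_op_def pcompose_add pcompose_mult shift_pderiv z_def by simp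
  then show ?thesis
    unfolding z_def[symmetric]
    by (simp add: coeff_pCons coeff_pderiv jacobi_eigenvalue_def jacobi_recurrence_coeff_def
        algebra_simps split: nat.split)
qed

lemma jacobi_eigen_taylor_recurrence:
  assumes "c * c = 1" "jacobi_op A B y = smult mu y"
  shows "jacobi_eigenvalue A B j * coeff (pcompose y [:c, 1:]) j
     + jacobi_recurrence_coeff c A B j * coeff (pcompose y [:c, 1:]) (Suc j)
     = mu * coeff (pcompose y [:c, 1:]) j"
  using jacobi_op_taylor_coeff[OF assms(1), of A B y j] assms(2) by (simp add: pcompose_smult)

lemma jacobi_eigen_taylor_coeff_nonzero:
  assumes "c * c = 1" "jacobi_op A B y = smult mu y" "y \<noteq> 0"
    and K: "\<And>j. jacobi_recurrence_coeff c A B j \<noteq> 0" and "j \<le> degree y"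
  shows "coeff (pcompose y [:c, 1:]) j \<noteq> 0"
proof
  assume zero: "coeff (pcompose y [:c, 1:]) j = 0"
  have "coeff (pcompose y [:c, 1:]) l = 0" if "j \<le> l" for l
    using that
  proof (induction l rule: dec_induct)
    case base
    show ?case using zero .
  next
    case (step l)
    then show ?case
      using jacobi_eigen_taylor_recurrence[OF assms(1,2), of l] K[of l] by simp
  qed
  then have "coeff (pcompose y [:c, 1:]) (degree (pcompose y [:c, 1:])) = 0"
    using assms(5) by (simp add: degree_pcompose)
  moreover have "pcompose y [:c, 1:] \<noteq> 0" using assms(3) pcompose_eq_0[of y "[:c, 1:]"] by auto
  ultimately show False by simp
qed

lemma jacobi_recurrence_coeff_nonzero:
  shows "A \<notin> \<int> \<Longrightarrow> jacobi_recurrence_coeff 1 A B j \<noteq> 0"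
    and "B \<notin> \<int> \<Longrightarrow> jacobi_recurrence_coeff (-1) A B j \<noteq> 0"
proof -
  have "A = - real j - 1" if "jacobi_recurrence_coeff 1 A B j = 0"
    using that by (simp add: jacobi_recurrence_coeff_def)
  then show "A \<notin> \<int> \<Longrightarrow> jacobi_recurrence_coeff 1 A B j \<noteq> 0" by force
  have "B = - real j - 1" if "jacobi_recurrence_coeff (-1) A B j = 0"
    using that by (simp add: jacobi_recurrence_coeff_def)
  then show "B \<notin> \<int> \<Longrightarrow> jacobi_recurrence_coeff (-1) A B j \<noteq> 0" by force
qed

lemma jacobi_eigen_nonzero_at_pm1:
  assumes "jacobi_op A B y = smult mu y" "y \<noteq> 0"
  shows "A \<notin> \<int> \<Longrightarrow> poly y 1 \<noteq> 0" and "B \<notin> \<int> \<Longrightarrow> poly y (-1) \<noteq> 0"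
  using jacobi_eigen_taylor_coeff_nonzero[OF _ assms, of 1 0]
    jacobi_eigen_taylor_coeff_nonzero[OF _ assms, of "-1" 0] jacobi_recurrence_coeff_nonzero
  by (auto simp: poly_0_coeff_0[symmetric] poly_pcompose)

lemma jacobi_eigenvalue_degree:
  assumes "jacobi_op A B y = smult mu y" "y \<noteq> 0"
  shows "mu = jacobi_eigenvalue A B (degree y)"
proof -
  define z where "z = pcompose y [:1, 1:]"
  have "degree z = degree y" "z \<noteq> 0"
    using assms(2) pcompose_eq_0[of y "[:1, 1:]"] by (auto simp: z_def degree_pcompose)
  then have "coeff z (degree y) \<noteq> 0" "coeff z (Suc (degree y)) = 0"
    by (metis leading_coeff_0_iff, simp add: coeff_eq_0)
  moreover have "jacobi_eigenvalue A B (degree y) * coeff z (degree y)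
      + jacobi_recurrence_coeff 1 A B (degree y) * coeff z (Suc (degree y)) = mu * coeff z (degree y)"
    using jacobi_eigen_taylor_recurrence[of 1 A B y mu "degree y"] assms by (simp add: z_def)
  ultimately show ?thesis by simp
qed

lemma jacobi_eigenpolyI:
  "jacobi_op A B y = smult mu y \<Longrightarrow> y \<noteq> 0 \<Longrightarrow> jacobi_eigenpoly A B y"
  using jacobi_eigenvalue_degree[of A B y mu] by (simp add: jacobi_eigenpoly_def)

lemma jacobi_eigenvalue_not_repeated:
  assumes "A \<notin> \<int>" "jacobi_op A B y = smult mu y" "y \<noteq> 0" "k < degree y"
  shows "jacobi_eigenvalue A B k \<noteq> jacobi_eigenvalue A B (degree y)"
proof
  assume eq: "jacobi_eigenvalue A B k = jacobi_eigenvalue A B (degree y)"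
  have K: "jacobi_recurrence_coeff 1 A B j \<noteq> 0" for j
    using jacobi_recurrence_coeff_nonzero(1)[OF assms(1)] .
  have "jacobi_recurrence_coeff 1 A B k * coeff (pcompose y [:1, 1:]) (Suc k) = 0"
    using jacobi_eigen_taylor_recurrence[of 1 A B y mu k] assms(2)
      jacobi_eigenvalue_degree[OF assms(2,3)] eq by simp
  moreover have "coeff (pcompose y [:1, 1:]) (Suc k) \<noteq> 0"
    using jacobi_eigen_taylor_coeff_nonzero[of 1 A B y mu "Suc k"] assms K by simp
  ultimately show False using K by simp
qed

text \<open>Taylor coefficients at x = 1 of the eigenpolynomial of degree n, counted downwards from
  the leading one: jacobi_taylor_seq A B n i is the coefficient of (x - 1)^(n - i).\<close>
primrec jacobi_taylor_seq :: "real \<Rightarrow> real \<Rightarrow> nat \<Rightarrow> nat \<Rightarrow> real" where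
  "jacobi_taylor_seq A B n 0 = 1"
| "jacobi_taylor_seq A B n (Suc i) =
     - jacobi_recurrence_coeff 1 A B (n - Suc i) * jacobi_taylor_seq A B n i
       / (jacobi_eigenvalue A B (n - Suc i) - jacobi_eigenvalue A B n)"

lemma ex_jacobi_eigenpoly:
  assumes "\<And>k. k < n \<Longrightarrow> jacobi_eigenvalue A B k \<noteq> jacobi_eigenvalue A B n"
  shows "\<exists>y. jacobi_eigenpoly A B y \<and> degree y = n"
proof -
  define mu where "mu = jacobi_eigenvalue A B n"
  define z where "z = (\<Sum>j\<le>n. monom (jacobi_taylor_seq A B n (n - j)) j)"
  have cz: "coeff z j = (if j \<le> n then jacobi_taylor_seq A B n (n - j) else 0)" for j
    unfolding z_def by (simp add: coeff_sum coeff_monom)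
  have "z \<noteq> 0" using cz[of n] by auto
  have "degree z = n"
  proof (rule antisym)
    show "degree z \<le> n" by (rule degree_le) (simp add: cz)
    show "n \<le> degree z" by (rule le_degree) (simp add: cz)
  qed
  have rec: "jacobi_eigenvalue A B j * coeff z j + jacobi_recurrence_coeff 1 A B j * coeff z (Suc j)
      = mu * coeff z j" for j
  proof (cases "j < n")
    case True
    define i where "i = n - Suc j"
    have "coeff z j = jacobi_taylor_seq A B n (Suc i)"
      using True by (simp add: cz i_def Suc_diff_Suc del: jacobi_taylor_seq.simps)
    moreover have "coeff z (Suc j) = jacobi_taylor_seq A B n i" using True by (simp add: cz i_def)
    moreover have "n - Suc i = j" using True by (simp add: i_def)
    ultimately have "coeff z j = - jacobi_recurrence_coeff 1 A B j * coeff z (Suc j)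
        / (jacobi_eigenvalue A B j - mu)"
      by (simp add: mu_def)
    moreover have "jacobi_eigenvalue A B j - mu \<noteq> 0" using assms[OF True] by (simp add: mu_def)
    ultimately show ?thesis by (simp add: field_simps)
  qed (auto simp: cz mu_def)
  have shift_back: "pcompose (pcompose p [:c, 1:]) [:-c, 1:] = p" for p :: "real poly" and c :: real
    by (simp add: pcompose_assoc[symmetric] pcompose_pCons)
  define y where "y = pcompose z [:-1, 1:]"
  have yz: "pcompose y [:1, 1:] = z"
    using shift_back[of z "-1"] by (simp add: y_def)
  have "pcompose (jacobi_op A B y) [:1, 1:] = pcompose (smult mu y) [:1, 1:]"
    by (rule poly_eqI) (use jacobi_op_taylor_coeff[of 1 A B y] rec in \<open>simp add: yz pcompose_smult\<close>)
  then have "jacobi_op A B y = smult mu y"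
    using shift_back[of _ 1] by metis
  moreover have "degree y = n" using \<open>degree z = n\<close> by (simp add: y_def degree_pcompose)
  moreover have "y \<noteq> 0" using \<open>z \<noteq> 0\<close> yz by auto
  ultimately show ?thesis using jacobi_eigenpolyI by blast
qed

lemma jacobi_eigenpoly_unique:
  assumes A: "A \<notin> \<int>" and y1: "jacobi_op A B y1 = smult mu y1" "y1 \<noteq> 0"
    and y2: "jacobi_op A B y2 = smult mu y2" "y2 \<noteq> 0"
  shows "\<exists>k. k \<noteq> 0 \<and> y1 = smult k y2"
proof -
  have mu: "mu = jacobi_eigenvalue A B (degree y1)" "mu = jacobi_eigenvalue A B (degree y2)"
    using jacobi_eigenvalue_degree y1 y2 by blast+
  have same_degree: "degree y1 = degree y2"
    using jacobi_eigenvalue_not_repeated[OF A y1, of "degree y2"]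
      jacobi_eigenvalue_not_repeated[OF A y2, of "degree y1"] mu
    by (cases "degree y1" "degree y2" rule: linorder_cases) auto
  define k where "k = lead_coeff y1 / lead_coeff y2"
  define d where "d = y1 - smult k y2"
  have d: "jacobi_op A B d = smult mu d"
    unfolding d_def jacobi_op_diff y1 y2 by (simp add: smult_diff_right mult.commute)
  have "d = 0"
  proof (rule ccontr)
    assume "d \<noteq> 0"
    have "degree d \<le> degree y1"
      unfolding d_def by (rule degree_diff_le) (simp_all add: same_degree)
    moreover have "coeff d (degree y1) = 0" using y2(2) same_degree by (simp add: d_def k_def)
    ultimately have "degree d < degree y1"
      using \<open>d \<noteq> 0\<close> by (metis le_neq_implies_less leading_coeff_0_iff)
    then show False
      using jacobi_eigenvalue_not_repeated[OF A y1, of "degree d"]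
        jacobi_eigenvalue_degree[OF d \<open>d \<noteq> 0\<close>] mu(1)
      by simp
  qed
  then show ?thesis using y1(2) y2(2) by (intro exI[of _ k]) (simp add: d_def k_def)
qed

lemma ex_jacobi_eigenpoly_iff:
  assumes "A \<notin> \<int>"
  shows "(\<exists>y. jacobi_eigenpoly A B y \<and> degree y = n)
    \<longleftrightarrow> (\<forall>k<n. real k + real n + A + B + 1 \<noteq> 0)"
proof -
  have diff: "jacobi_eigenvalue A B k - jacobi_eigenvalue A B n
      = (real k - real n) * (real k + real n + A + B + 1)" for k
    by (simp add: jacobi_eigenvalue_def algebra_simps)
  have "(\<forall>k<n. real k + real n + A + B + 1 \<noteq> 0)
      \<longleftrightarrow> (\<forall>k<n. jacobi_eigenvalue A B k \<noteq> jacobi_eigenvalue A B n)"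
    by (metis diff eq_iff_diff_eq_0 mult_eq_0_iff of_nat_eq_iff less_irrefl)
  then show ?thesis
    using ex_jacobi_eigenpoly jacobi_eigenvalue_not_repeated[OF assms]
    by (auto simp: jacobi_eigenpoly_def)
qed

lemma coprime_linear_poly: "poly Q c \<noteq> 0 \<Longrightarrow> coprime Q [:-c, 1:]"
  for Q :: "real poly"
  using prime_elem_imp_coprime[OF prime_elem_linear_field_poly[of 1 "-c"], of Q]
  by (simp add: poly_eq_0_iff_dvd coprime_commute)

lemma degree_mult_pderiv_le: "degree (p * pderiv q) \<le> degree p + degree q - 1"
  for p q :: "real poly"
proof (cases "pderiv q = 0")
  case False
  then have "degree q \<noteq> 0" using pderiv_eq_0_iff[of q] by auto
  then show ?thesis using degree_mult_le[of p "pderiv q"] by (simp add: degree_pderiv)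
qed simp

text \<open>A solution w = Q'/Q + R with a polynomial part R would have leading term
  T_p R^2 of too high a degree.\<close>
lemma riccati_polynomial_part_zero:
  assumes "Q \<noteq> 0" and res: "riccati_residual A B mu (pderiv Q + Q * R) Q = 0"
  shows "R = 0"
proof (rule ccontr)
  assume "R \<noteq> 0"
  define H where "H = T_p * R ^ 2 + (T_p * pderiv R + T_q A B * R - [:mu:])"
  define K where "K = T_p * pderiv (pderiv Q) + T_q A B * pderiv Q + smult 2 (T_p * R * pderiv Q)"
  have "riccati_residual A B mu (pderiv Q + Q * R) Q = Q * (K + H * Q)"
    by (rule real_poly_eqI)
      (simp add: riccati_residual_def K_def H_def pderiv_mult pderiv_add T_r_def; algebra)
  then have KH: "K + H * Q = 0" using res assms(1) by simp
  have deg_T: "T_p \<noteq> 0" "degree T_p = 2" "degree (T_q A B) \<le> 1" by (simp_all add: T_p_def T_q_def)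
  have "degree (T_p * R ^ 2) = 2 * degree R + 2"
    using \<open>R \<noteq> 0\<close> deg_T by (simp add: degree_mult_eq degree_power_eq)
  moreover have "degree (T_p * pderiv R + T_q A B * R - [:mu:]) \<le> degree R + 1"
    using degree_mult_pderiv_le[of T_p R] degree_mult_le[of "T_q A B" R] deg_T
    by (intro degree_diff_le degree_add_le) auto
  ultimately have "degree H = 2 * degree R + 2"
    unfolding H_def by (subst degree_add_eq_left) auto
  then have "degree (H * Q) = 2 * degree R + 2 + degree Q"
    using assms(1) by (subst degree_mult_eq) auto
  moreover have "degree K \<le> degree R + 1 + degree Q"
    using degree_mult_pderiv_le[of T_p "pderiv Q"] degree_pderiv[of Q]
      degree_mult_pderiv_le[of "T_q A B" Q] degree_mult_pderiv_le[of "T_p * R" Q]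
      degree_mult_le[of T_p R] deg_T
    unfolding K_def by (intro degree_add_le) auto
  ultimately have "degree (K + H * Q) = 2 * degree R + 2 + degree Q"
    by (subst degree_add_eq_right) auto
  then show False using KH by simp
qed

lemma Ric_regular_is_log_deriv:
  assumes w: "w \<in> Ric A B mu" and "regular_at w 1" "regular_at w (-1)"
  obtains y where "y \<noteq> 0" "w = Fract (pderiv y) y" "jacobi_op A B y = smult mu y"
proof -
  obtain P Q where PQ: "Q \<noteq> 0" "coprime P Q" "w = Fract P Q" using ex_coprime_Fract by blast
  have res: "riccati_residual A B mu P Q = 0" using w PQ Fract_mem_Ric_iff by blast
  have "coprime Q [:-1, 1:]" "coprime Q [:- (-1), 1:]"
    using assms(2,3) PQ regular_at_Fract_coprime_iff coprime_linear_poly by blast+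
  moreover have "T_p = [:- (-1), 1:] * [:-1, 1:]" by (rule T_p_factor) simp
  ultimately have "coprime Q T_p" by (metis coprime_mult_right_iff)
  moreover have "Q dvd T_p * (P * (P - pderiv Q))"
    using res unfolding riccati_residual_split by (metis dvd_triv_left eq_iff_diff_eq_0 mult.assoc)
  ultimately have "Q dvd P * (P - pderiv Q)" by (simp add: coprime_dvd_mult_right_iff)
  then have "Q dvd P - pderiv Q"
    using PQ(2) by (simp add: coprime_commute coprime_dvd_mult_right_iff)
  then obtain R where "P = pderiv Q + Q * R" by (metis add_diff_cancel_left' add_diff_eq dvdE)
  moreover have "R = 0" using riccati_polynomial_part_zero PQ(1) res calculation by blast
  ultimately have "P = pderiv Q" by simp
  then show ?thesis
    using that PQ res log_deriv_mem_Ric_iff Fract_mem_Ric_iff by blast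
qed

section \<open>Degree at infinity\<close>

lemma eventually_poly_nonzero_at_top: "p \<noteq> 0 \<Longrightarrow> eventually (\<lambda>x. poly p x \<noteq> 0) at_top"
  for p :: "real poly"
  using poly_eventually_not_zero filter_leD[OF at_top_le_at_infinity] by blast

lemma has_degree_Fract_iff:
  assumes "Q \<noteq> 0"
  shows "has_degree (Fract P Q) d \<longleftrightarrow> ((\<lambda>x. x * poly P x / poly Q x) \<longlongrightarrow> d) at_top"
proof
  assume "has_degree (Fract P Q) d"
  then obtain P1 Q1 where Q1: "Q1 \<noteq> 0" "Fract P Q = Fract P1 Q1"
    and lim: "((\<lambda>x. x * poly P1 x / poly Q1 x) \<longlongrightarrow> d) at_top"
    unfolding has_degree_def by auto
  have cross: "poly P x * poly Q1 x = poly P1 x * poly Q x" for x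
    using Q1 assms by (simp add: eq_fract flip: poly_mult)
  have "eventually (\<lambda>x. x * poly P1 x / poly Q1 x = x * poly P x / poly Q x) at_top"
    using eventually_poly_nonzero_at_top[OF assms] eventually_poly_nonzero_at_top[OF Q1(1)]
    by eventually_elim (simp add: field_simps cross)
  then show "((\<lambda>x. x * poly P x / poly Q x) \<longlongrightarrow> d) at_top"
    using lim by (simp add: tendsto_cong)
qed (use assms in \<open>auto simp: has_degree_def\<close>)

lemma has_degree_unique: "has_degree w d \<Longrightarrow> has_degree w e \<Longrightarrow> d = e"
  by (cases w) (auto simp: has_degree_Fract_iff intro: tendsto_unique[OF trivial_limit_at_top_linorder])

lemma has_degree_add:
  assumes "has_degree w d" "has_degree z e"
  shows "has_degree (w + z) (d + e)"
proof -
  obtain P Q P1 Q1 where w: "Q \<noteq> 0" "w = Fract P Q" and z: "Q1 \<noteq> 0" "z = Fract P1 Q1"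
    by (metis Fract_cases)
  have "eventually (\<lambda>x. x * poly P x / poly Q x + x * poly P1 x / poly Q1 x
      = x * poly (P * Q1 + P1 * Q) x / poly (Q * Q1) x) at_top"
    using eventually_poly_nonzero_at_top[OF w(1)] eventually_poly_nonzero_at_top[OF z(1)]
    by eventually_elim (simp add: field_simps)
  moreover have "((\<lambda>x. x * poly P x / poly Q x + x * poly P1 x / poly Q1 x) \<longlongrightarrow> d + e) at_top"
    using assms w z by (intro tendsto_add) (simp_all add: has_degree_Fract_iff)
  ultimately show ?thesis using w z by (simp add: has_degree_Fract_iff tendsto_cong)
qed

lemma has_degree_FractI:
  assumes "D \<noteq> 0" and deg: "pCons 0 N - smult d D = 0 \<or> degree (pCons 0 N - smult d D) < degree D"
  shows "has_degree (Fract N D) d"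
proof -
  define M where "M = pCons 0 N - smult d D"
  have "((\<lambda>x. poly M x / poly D x) \<longlongrightarrow> 0) at_top"
  proof (cases "M = 0")
    case False
    then show ?thesis
      using deg poly_divide_tendsto_0_at_infinity[of M D] unfolding M_def[symmetric]
      by (auto intro: tendsto_mono[OF at_top_le_at_infinity])
  qed simp
  then have "((\<lambda>x. d + poly M x / poly D x) \<longlongrightarrow> d) at_top"
    using tendsto_add[OF tendsto_const] by fastforce
  moreover have "eventually (\<lambda>x. d + poly M x / poly D x = x * poly N x / poly D x) at_top"
    using eventually_poly_nonzero_at_top[OF assms(1)]
    by eventually_elim (simp add: M_def field_simps)
  ultimately show ?thesis using assms(1) by (simp add: has_degree_Fract_iff tendsto_cong)
qed

lemma has_degree_log_deriv:
  assumes "y \<noteq> 0"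
  shows "has_degree (Fract (pderiv y) y) (real (degree y))"
proof (rule has_degree_FractI[OF assms])
  define M where "M = pCons 0 (pderiv y) - smult (real (degree y)) y"
  have coeff_M: "coeff M j = (real j - real (degree y)) * coeff y j" for j
    by (cases j) (simp_all add: M_def coeff_pderiv algebra_simps)
  have "coeff M j = 0" if "degree y \<le> j" for j
    using that by (cases "j = degree y") (simp_all add: coeff_M coeff_eq_0)
  then show "M = 0 \<or> degree M < degree y"
    by (metis leading_coeff_0_iff not_le)
qed

lemma has_degree_const_over_linear: "has_degree (Fract [:r:] [:-c, 1:]) r"
  by (rule has_degree_FractI) simp_all

section \<open>Gauge transformations and the classification of solutions\<close>

definition prefactor_log_deriv :: "real \<Rightarrow> real \<Rightarrow> real poly fract" where
  "prefactor_log_deriv \<alpha> \<beta> = Fract [:\<alpha>:] [:-1, 1:] + Fract [:\<beta>:] [:1, 1:]"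

lemma prefactor_log_deriv_eq: "prefactor_log_deriv \<alpha> \<beta> = Fract [:\<alpha> - \<beta>, \<alpha> + \<beta>:] T_p"
  by (simp add: prefactor_log_deriv_def T_p_def)

lemma has_degree_prefactor_log_deriv: "has_degree (prefactor_log_deriv \<alpha> \<beta>) (\<alpha> + \<beta>)"
  using has_degree_add[OF has_degree_const_over_linear[of \<alpha> 1] has_degree_const_over_linear[of \<beta> "-1"]]
  unfolding prefactor_log_deriv_def by (simp only: minus_minus)

lemma riccati_residual_gauge:
  assumes "\<alpha> * (\<alpha> + a) = 0" "\<beta> * (\<beta> + b) = 0"
  shows "riccati_residual (a + 2 * \<alpha>) (b + 2 * \<beta>) (lam - (\<alpha> + \<beta>) * (\<alpha> + \<beta> + a + b + 1))
      (P * T_p - [:\<alpha> - \<beta>, \<alpha> + \<beta>:] * Q) (Q * T_p)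
    = T_p ^ 2 * riccati_residual a b lam P Q"
  using assms
  by (intro real_poly_eqI)
    (simp add: riccati_residual_def pderiv_mult pderiv_diff pderiv_add pderiv_smult pderiv_pCons
      T_p_def T_q_def T_r_def; algebra)

text \<open>alpha * (alpha + a) = 0 says that alpha is one of the local exponents 0 and -a
  of T(a, b) at x = 1, and likewise for beta at x = -1.\<close>
lemma Ric_gauge_iff:
  assumes "\<alpha> * (\<alpha> + a) = 0" "\<beta> * (\<beta> + b) = 0"
  shows "w - prefactor_log_deriv \<alpha> \<beta>
      \<in> Ric (a + 2 * \<alpha>) (b + 2 * \<beta>) (lam - (\<alpha> + \<beta>) * (\<alpha> + \<beta> + a + b + 1))
    \<longleftrightarrow> w \<in> Ric a b lam"
proof -
  obtain P Q where PQ: "Q \<noteq> 0" "w = Fract P Q" by (cases w)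
  have "T_p \<noteq> 0" by (simp add: T_p_def)
  then have eq: "w - prefactor_log_deriv \<alpha> \<beta> = Fract (P * T_p - [:\<alpha> - \<beta>, \<alpha> + \<beta>:] * Q) (Q * T_p)"
    using PQ by (simp add: prefactor_log_deriv_eq)
  have "w - prefactor_log_deriv \<alpha> \<beta>
      \<in> Ric (a + 2 * \<alpha>) (b + 2 * \<beta>) (lam - (\<alpha> + \<beta>) * (\<alpha> + \<beta> + a + b + 1))
    \<longleftrightarrow> T_p ^ 2 * riccati_residual a b lam P Q = 0"
    unfolding eq riccati_residual_gauge[OF assms, symmetric]
    by (rule Fract_mem_Ric_iff) (simp add: PQ \<open>T_p \<noteq> 0\<close>)
  also have "\<dots> \<longleftrightarrow> w \<in> Ric a b lam" using PQ \<open>T_p \<noteq> 0\<close> by (simp add: Fract_mem_Ric_iff)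
  finally show ?thesis .
qed

text \<open>A quasi-rational eigenfunction of type i is (x - 1)^alpha (x + 1)^beta y with a polynomial y,
  where alpha = exponent_at_1 i a and beta = exponent_at_m1 i b.\<close>
definition exponent_at_1 :: "nat \<Rightarrow> real \<Rightarrow> real" where
  "exponent_at_1 i a = (if i = 2 \<or> i = 3 then - a else 0)"

definition exponent_at_m1 :: "nat \<Rightarrow> real \<Rightarrow> real" where
  "exponent_at_m1 i b = (if i = 2 \<or> i = 4 then - b else 0)"

definition qr_eigenpoly :: "real \<Rightarrow> real \<Rightarrow> nat \<Rightarrow> real poly \<Rightarrow> bool" where
  "qr_eigenpoly a b i y \<longleftrightarrow>
     jacobi_eigenpoly (a + 2 * exponent_at_1 i a) (b + 2 * exponent_at_m1 i b) y"

definition qr_log_deriv :: "real \<Rightarrow> real \<Rightarrow> nat \<Rightarrow> real poly \<Rightarrow> real poly fract" where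
  "qr_log_deriv a b i y =
     prefactor_log_deriv (exponent_at_1 i a) (exponent_at_m1 i b) + Fract (pderiv y) y"

lemma exponent_at_1_eq_0_or: "exponent_at_1 i a * (exponent_at_1 i a + a) = 0"
  by (simp add: exponent_at_1_def)

lemma exponent_at_m1_eq_0_or: "exponent_at_m1 i b * (exponent_at_m1 i b + b) = 0"
  by (simp add: exponent_at_m1_def)

lemma gauged_parameter_notin_Ints:
  shows "a \<notin> \<int> \<Longrightarrow> a + 2 * exponent_at_1 i a \<notin> \<int>"
    and "b \<notin> \<int> \<Longrightarrow> b + 2 * exponent_at_m1 i b \<notin> \<int>"
  by (auto simp: exponent_at_1_def exponent_at_m1_def)

lemma asym_type_range: "asym_type w \<in> {1, 2, 3, 4}"
  by (simp add: asym_type_def)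

lemma d_type_eq_exponents:
  "i \<in> {1, 2, 3, 4} \<Longrightarrow> d_type i a b = exponent_at_1 i a + exponent_at_m1 i b"
  by (auto simp: d_type_def exponent_at_1_def exponent_at_m1_def)

lemma lam_type_eq_gauged_eigenvalue:
  fixes a b :: real
  assumes "i \<in> {1, 2, 3, 4}"
  defines "\<alpha> \<equiv> exponent_at_1 i a" and "\<beta> \<equiv> exponent_at_m1 i b"
  shows "lam_type i (real n) a b
    = jacobi_eigenvalue (a + 2 * \<alpha>) (b + 2 * \<beta>) n + (\<alpha> + \<beta>) * (\<alpha> + \<beta> + a + b + 1)"
  using assms by (auto simp: lam_type_def jacobi_eigenvalue_def exponent_at_1_def
      exponent_at_m1_def algebra_simps)

lemma Ric_remove_pole:
  assumes "c * c = 1" "2 * e = (a - b) * c + a + b" "w \<in> Ric a b lam"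
  shows "regular_at (w - Fract [:if regular_at w c then 0 else - e:] [:-c, 1:]) c"
proof (cases "regular_at w c")
  case True
  then show ?thesis by (simp add: fract_collapse)
next
  case False
  then have "regular_at (w + Fract [:e:] [:-c, 1:]) c" using Ric_simple_pole[OF assms] by blast
  moreover have "w - Fract [:- e:] [:-c, 1:] = w + Fract [:e:] [:-c, 1:]"
    by (metis add.inverse_neutral diff_minus_eq_add minus_fract minus_pCons)
  ultimately show ?thesis using False by metis
qed

lemma Ric_classification:
  assumes "w \<in> Ric a b lam"
  obtains y where "qr_eigenpoly a b (asym_type w) y" "w = qr_log_deriv a b (asym_type w) y"
    "lam = lam_type (asym_type w) (real (degree y)) a b"
proof -
  define i where "i = asym_type w"
  define \<alpha> \<beta> where "\<alpha> = exponent_at_1 i a" and "\<beta> = exponent_at_m1 i b"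
  define u where "u = w - prefactor_log_deriv \<alpha> \<beta>"
  have u: "u \<in> Ric (a + 2 * \<alpha>) (b + 2 * \<beta>) (lam - (\<alpha> + \<beta>) * (\<alpha> + \<beta> + a + b + 1))"
    unfolding u_def \<alpha>_def \<beta>_def
    using Ric_gauge_iff[OF exponent_at_1_eq_0_or exponent_at_m1_eq_0_or] assms by blast
  have split: "w - (F + G) = (w - F) + - G" "w - (F + G) = (w - G) + - F"
    for F G :: "real poly fract"
    by (simp_all add: algebra_simps)
  have "\<alpha> = (if regular_at w 1 then 0 else - a)" "\<beta> = (if regular_at w (-1) then 0 else - b)"
    by (simp_all add: \<alpha>_def \<beta>_def i_def exponent_at_1_def exponent_at_m1_def asym_type_def)
  then have "regular_at (w - Fract [:\<alpha>:] [:-1, 1:]) 1" "regular_at (w - Fract [:\<beta>:] [:1, 1:]) (-1)"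
    using Ric_remove_pole[of 1 a a b w lam] Ric_remove_pole[of "-1" b a b w lam] assms by simp_all
  then have r: "regular_at ((w - Fract [:\<alpha>:] [:-1, 1:]) + - Fract [:\<beta>:] [:1, 1:]) 1"
    "regular_at ((w - Fract [:\<beta>:] [:1, 1:]) + - Fract [:\<alpha>:] [:-1, 1:]) (-1)"
    by (auto intro!: regular_at_add regular_at_uminus simp: regular_at_const_over_linear_iff)
  have "regular_at u 1" using r(1) by (simp only: u_def prefactor_log_deriv_def split(1))
  moreover have "regular_at u (-1)" using r(2) by (simp only: u_def prefactor_log_deriv_def split(2))
  ultimately obtain y where y: "y \<noteq> 0" "u = Fract (pderiv y) y"
    "jacobi_op (a + 2 * \<alpha>) (b + 2 * \<beta>) y = smult (lam - (\<alpha> + \<beta>) * (\<alpha> + \<beta> + a + b + 1)) y"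
    using Ric_regular_is_log_deriv[OF u] by blast
  have "qr_eigenpoly a b i y"
    using jacobi_eigenpolyI[OF y(3,1)] by (simp add: qr_eigenpoly_def \<alpha>_def \<beta>_def)
  moreover have "w = qr_log_deriv a b i y" using y(2) by (simp add: qr_log_deriv_def u_def \<alpha>_def \<beta>_def)
  moreover have "lam = lam_type i (real (degree y)) a b"
    using jacobi_eigenvalue_degree[OF y(3,1)] lam_type_eq_gauged_eigenvalue[of i] asym_type_range
    by (simp add: i_def \<alpha>_def \<beta>_def)
  ultimately show ?thesis using that unfolding i_def by blast
qed

lemma qr_log_deriv_mem_Ric:
  assumes "i \<in> {1, 2, 3, 4}" "qr_eigenpoly a b i y"
  shows "qr_log_deriv a b i y \<in> Ric a b (lam_type i (real (degree y)) a b)"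
proof -
  define \<alpha> \<beta> where "\<alpha> = exponent_at_1 i a" and "\<beta> = exponent_at_m1 i b"
  have "Fract (pderiv y) y \<in> Ric (a + 2 * \<alpha>) (b + 2 * \<beta>)
      (jacobi_eigenvalue (a + 2 * \<alpha>) (b + 2 * \<beta>) (degree y))"
    using assms(2) by (simp add: qr_eigenpoly_def jacobi_eigenpoly_def log_deriv_mem_Ric_iff \<alpha>_def \<beta>_def)
  then show ?thesis
    using Ric_gauge_iff[OF exponent_at_1_eq_0_or exponent_at_m1_eq_0_or,
        of "qr_log_deriv a b i y" i a i b "lam_type i (real (degree y)) a b"]
      lam_type_eq_gauged_eigenvalue[OF assms(1)]
    by (simp add: qr_log_deriv_def \<alpha>_def \<beta>_def)
qed

lemma asym_type_qr_log_deriv: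
  assumes "a \<notin> \<int>" "b \<notin> \<int>" "i \<in> {1, 2, 3, 4}" "qr_eigenpoly a b i y"
  shows "asym_type (qr_log_deriv a b i y) = i"
proof -
  define \<alpha> \<beta> where "\<alpha> = exponent_at_1 i a" and "\<beta> = exponent_at_m1 i b"
  have y: "y \<noteq> 0" "jacobi_op (a + 2 * \<alpha>) (b + 2 * \<beta>) y
      = smult (jacobi_eigenvalue (a + 2 * \<alpha>) (b + 2 * \<beta>) (degree y)) y"
    using assms(4) by (simp_all add: qr_eigenpoly_def jacobi_eigenpoly_def \<alpha>_def \<beta>_def)
  have "regular_at (Fract (pderiv y) y) 1" "regular_at (Fract (pderiv y) y) (-1)"
    using jacobi_eigen_nonzero_at_pm1[OF y(2,1)] gauged_parameter_notin_Ints assms(1,2) y(1)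
    by (simp_all add: regular_at_Fract \<alpha>_def \<beta>_def)
  then have reg: "regular_at (Fract [:\<beta>:] [:1, 1:] + Fract (pderiv y) y) 1"
    "regular_at (Fract [:\<alpha>:] [:-1, 1:] + Fract (pderiv y) y) (-1)"
    by (auto intro!: regular_at_add simp: regular_at_const_over_linear_iff)
  have eq: "qr_log_deriv a b i y = Fract [:\<alpha>:] [:-1, 1:] + (Fract [:\<beta>:] [:1, 1:] + Fract (pderiv y) y)"
    "qr_log_deriv a b i y = Fract [:\<beta>:] [:1, 1:] + (Fract [:\<alpha>:] [:-1, 1:] + Fract (pderiv y) y)"
    by (simp_all only: qr_log_deriv_def prefactor_log_deriv_def \<alpha>_def \<beta>_def add_ac)
  have "regular_at (qr_log_deriv a b i y) 1 \<longleftrightarrow> \<alpha> = 0"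
    using reg(1) unfolding eq(1)
    by (simp only: regular_at_add_right_iff) (simp add: regular_at_const_over_linear_iff)
  moreover have "regular_at (qr_log_deriv a b i y) (-1) \<longleftrightarrow> \<beta> = 0"
    using reg(2) unfolding eq(2)
    by (simp only: regular_at_add_right_iff) (simp add: regular_at_const_over_linear_iff)
  moreover have "a \<noteq> 0" "b \<noteq> 0" using assms(1,2) by auto
  ultimately show ?thesis
    using assms(3) by (auto simp: asym_type_def \<alpha>_def \<beta>_def exponent_at_1_def exponent_at_m1_def)
qed

lemma has_degree_qr_log_deriv:
  assumes "i \<in> {1, 2, 3, 4}" "y \<noteq> 0"
  shows "has_degree (qr_log_deriv a b i y) (real (degree y) + d_type i a b)"
  using has_degree_add[OF has_degree_prefactor_log_deriv has_degree_log_deriv[OF assms(2)],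
      of "exponent_at_1 i a" "exponent_at_m1 i b"]
  unfolding qr_log_deriv_def d_type_eq_exponents[OF assms(1)] by (simp only: add_ac)

lemma index_set_eq:
  assumes "a \<notin> \<int>" "b \<notin> \<int>" "i \<in> {1, 2, 3, 4}"
  shows "index_set i a b = {real (degree y) |y. qr_eigenpoly a b i y}"
proof (intro equalityI subsetI)
  fix k assume "k \<in> index_set i a b"
  then obtain lam w where w: "w \<in> Ric a b lam" "asym_type w = i" "has_degree w (k + d_type i a b)"
    unfolding index_set_def by blast
  obtain y where y: "qr_eigenpoly a b i y" "w = qr_log_deriv a b i y"
    using Ric_classification[OF w(1)] w(2) by metis
  then have "y \<noteq> 0" by (simp add: qr_eigenpoly_def jacobi_eigenpoly_def)
  then have "k = real (degree y)"
    using has_degree_unique[OF w(3)] has_degree_qr_log_deriv[OF assms(3)] y(2) by fastforce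
  then show "k \<in> {real (degree y) |y. qr_eigenpoly a b i y}" using y(1) by blast
next
  fix k assume "k \<in> {real (degree y) |y. qr_eigenpoly a b i y}"
  then obtain y where y: "k = real (degree y)" "qr_eigenpoly a b i y" by blast
  then have "y \<noteq> 0" by (simp add: qr_eigenpoly_def jacobi_eigenpoly_def)
  then show "k \<in> index_set i a b"
    unfolding index_set_def
    using qr_log_deriv_mem_Ric[OF assms(3) y(2)] asym_type_qr_log_deriv[OF assms y(2)]
      has_degree_qr_log_deriv[OF assms(3)] y(1) by blast
qed

lemma index_set_char:
  assumes "a \<notin> \<int>" "b \<notin> \<int>" "i \<in> {1, 2, 3, 4}"
  shows "index_set i a b = {real n |n. \<forall>k<n. real k + real n + a + b + 2 * d_type i a b + 1 \<noteq> 0}"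
proof -
  have "index_set i a b = {real n |n. \<exists>y. qr_eigenpoly a b i y \<and> degree y = n}"
    unfolding index_set_eq[OF assms] by blast
  also have "\<dots> = {real n |n. \<forall>k<n. real k + real n + a + b + 2 * d_type i a b + 1 \<noteq> 0}"
    using ex_jacobi_eigenpoly_iff[OF gauged_parameter_notin_Ints(1)[OF assms(1)],
        where B = "b + 2 * exponent_at_m1 i b"]
    unfolding qr_eigenpoly_def d_type_eq_exponents[OF assms(3)] by (simp add: algebra_simps)
  finally show ?thesis .
qed

lemma asym_type_image_Ric:
  assumes "a \<notin> \<int>" "b \<notin> \<int>"
  shows "asym_type ` Ric a b lam = {i \<in> {1, 2, 3, 4}. lam \<in> sigma_type i a b}"
proof (intro equalityI subsetI)
  fix i assume "i \<in> asym_type ` Ric a b lam"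
  then obtain w where w: "w \<in> Ric a b lam" "i = asym_type w" by blast
  then obtain y where "qr_eigenpoly a b i y" "lam = lam_type i (real (degree y)) a b"
    using Ric_classification by metis
  moreover have "i \<in> {1, 2, 3, 4}" using w(2) asym_type_range by simp
  ultimately show "i \<in> {i \<in> {1, 2, 3, 4}. lam \<in> sigma_type i a b}"
    using index_set_eq[OF assms] by (auto simp: sigma_type_def sigma_of_def)
next
  fix i assume "i \<in> {i \<in> {1, 2, 3, 4}. lam \<in> sigma_type i a b}"
  then obtain y where "i \<in> {1, 2, 3, 4}" "qr_eigenpoly a b i y" "lam = lam_type i (real (degree y)) a b"
    using index_set_eq[OF assms] by (auto simp: sigma_type_def sigma_of_def)
  then show "i \<in> asym_type ` Ric a b lam"
    using qr_log_deriv_mem_Ric asym_type_qr_log_deriv[OF assms] by (metis image_eqI)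
qed

lemma sigma_qr_eq_Un:
  assumes "a \<notin> \<int>" "b \<notin> \<int>"
  shows "sigma_qr a b = sigma_type 1 a b \<union> sigma_type 2 a b \<union> sigma_type 3 a b \<union> sigma_type 4 a b"
proof -
  have "Ric a b lam \<noteq> {} \<longleftrightarrow>
      lam \<in> sigma_type 1 a b \<union> sigma_type 2 a b \<union> sigma_type 3 a b \<union> sigma_type 4 a b" for lam
  proof -
    have "Ric a b lam \<noteq> {} \<longleftrightarrow> asym_type ` Ric a b lam \<noteq> {}" by simp
    then show ?thesis unfolding asym_type_image_Ric[OF assms] by auto
  qed
  then show ?thesis unfolding sigma_qr_def by auto
qed

lemma Fract_log_deriv_smult:
  "k \<noteq> 0 \<Longrightarrow> Fract (pderiv (smult k y)) (smult k y) = Fract (pderiv y) y"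
  using mult_fract_cancel[of "[:k:]" "pderiv y" y] by (simp add: pderiv_smult)

lemma inj_on_asym_type_Ric:
  assumes "a \<notin> \<int>"
  shows "inj_on asym_type (Ric a b lam)"
proof (rule inj_onI)
  fix w1 w2 assume w: "w1 \<in> Ric a b lam" "w2 \<in> Ric a b lam" "asym_type w1 = asym_type w2"
  define i where "i = asym_type w1"
  define A B where "A = a + 2 * exponent_at_1 i a" and "B = b + 2 * exponent_at_m1 i b"
  obtain y1 where y1: "qr_eigenpoly a b i y1" "w1 = qr_log_deriv a b i y1"
      "lam = lam_type i (real (degree y1)) a b"
    using Ric_classification[OF w(1)] unfolding i_def by blast
  obtain y2 where y2: "qr_eigenpoly a b i y2" "w2 = qr_log_deriv a b i y2"
      "lam = lam_type i (real (degree y2)) a b"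
    using Ric_classification[OF w(2)] unfolding i_def w(3) by blast
  have "jacobi_eigenvalue A B (degree y1) = jacobi_eigenvalue A B (degree y2)"
    using y1(3) y2(3) lam_type_eq_gauged_eigenvalue[of i] asym_type_range[of w1]
    by (simp add: i_def A_def B_def)
  then have "jacobi_op A B y1 = smult (jacobi_eigenvalue A B (degree y1)) y1" "y1 \<noteq> 0"
    "jacobi_op A B y2 = smult (jacobi_eigenvalue A B (degree y1)) y2" "y2 \<noteq> 0"
    using y1(1) y2(1) by (simp_all add: qr_eigenpoly_def jacobi_eigenpoly_def A_def B_def)
  moreover have "A \<notin> \<int>" using gauged_parameter_notin_Ints(1)[OF assms] by (simp add: A_def)
  ultimately obtain k where "k \<noteq> 0" "y1 = smult k y2" using jacobi_eigenpoly_unique by blast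
  then show "w1 = w2" using y1(2) y2(2) by (simp add: qr_log_deriv_def Fract_log_deriv_smult)
qed

section \<open>Coincidences between eigenvalues of different types\<close>

lemma lam_type_eq_iff:
  "lam_type i k a b = lam_type j l a b \<longleftrightarrow>
     k + d_type i a b = l + d_type j a b \<or> (k + d_type i a b) + (l + d_type j a b) + a + b + 1 = 0"
proof -
  have degree_form: "lam_type i k a b = (k + d_type i a b) * ((k + d_type i a b) + (a + b + 1))"
    for i k by (simp add: lam_type_def d_type_def algebra_simps)
  have quad: "x * (x + c) = y * (y + c) \<longleftrightarrow> x = y \<or> x + y + c = 0" for x y c :: real
  proof -
    have "x * (x + c) - y * (y + c) = (x - y) * (x + y + c)" by algebra
    then show ?thesis by auto
  qed
  show ?thesis unfolding degree_form quad[of "k + d_type i a b"] by (simp only: add_ac)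
qed

lemma lam_type_ne_lam_type:
  assumes "d_type i a b - d_type j a b \<notin> \<int>"
    and "d_type i a b + d_type j a b + a + b \<in> \<int> \<Longrightarrow> 0 \<le> d_type i a b + d_type j a b + a + b"
  shows "lam_type i (real n) a b \<noteq> lam_type j (real l) a b"
proof
  assume "lam_type i (real n) a b = lam_type j (real l) a b"
  then have "d_type i a b - d_type j a b = of_int (int l - int n)
      \<or> d_type i a b + d_type j a b + a + b = of_int (- int n - int l - 1)"
    unfolding lam_type_eq_iff by (auto simp: algebra_simps)
  then show False
  proof
    assume "d_type i a b + d_type j a b + a + b = of_int (- int n - int l - 1)"
    moreover have "of_int (- int n - int l - 1) < (0 :: real)" by simp
    ultimately show False using assms(2) by (metis Ints_of_int not_le)
  qed (use assms(1) in auto)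
qed

lemma sigma_of_N0_disjoint:
  assumes "a \<notin> \<int>" "b \<notin> \<int>" "a + b \<notin> \<int>"
    and "i \<in> {1, 2, 3, 4}" "j \<in> {1, 2, 3, 4}" "i \<noteq> j" "i \<in> {1, 2} \<or> j \<in> {1, 2}"
  shows "sigma_of i N0 a b \<inter> sigma_of j N0 a b = {}"
proof -
  have Ints: "- a \<notin> \<int>" "- b \<notin> \<int>" "- a - b \<notin> \<int>"
    using assms(1-3) minus_in_Ints_iff[of a] minus_in_Ints_iff[of b] minus_in_Ints_iff[of "a + b"]
    by auto
  have "(i, j) \<in> {(1, 2), (1, 3), (1, 4), (2, 1), (2, 3), (2, 4), (3, 1), (3, 2), (4, 1), (4, 2)}"
    using assms(4-7) by auto
  then have "d_type i a b - d_type j a b \<notin> \<int>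
      \<and> (d_type i a b + d_type j a b + a + b \<in> \<int> \<longrightarrow> 0 \<le> d_type i a b + d_type j a b + a + b)"
    using assms(1-3) Ints by (simp add: d_type_def) (elim disjE; simp add: algebra_simps)
  then have "lam_type i (real n) a b \<noteq> lam_type j (real l) a b" for n l
    by (intro lam_type_ne_lam_type) auto
  then show ?thesis unfolding sigma_of_def N0_def by blast
qed

lemma sigma_of_I3m_disjoint: "sigma_of 3 (I3m a b) a b \<inter> sigma_of 4 N0 a b = {}"
proof -
  have "lam_type 3 k a b \<noteq> lam_type 4 l a b" if "k \<in> I3m a b" "l \<in> N0" for k l
  proof
    have "0 \<le> k" "2 * k - a + b < 0" "0 \<le> l" using that by (auto simp: I3m_def N0_def)
    moreover assume "lam_type 3 k a b = lam_type 4 l a b"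
    ultimately show False unfolding lam_type_eq_iff by (simp add: d_type_def)
  qed
  then show ?thesis unfolding sigma_of_def by blast
qed

lemma sigma_of_I4m_disjoint: "sigma_of 4 (I4m a b) a b \<inter> sigma_of 3 N0 a b = {}"
proof -
  have "lam_type 4 k a b \<noteq> lam_type 3 l a b" if "k \<in> I4m a b" "l \<in> N0" for k l
  proof
    have "0 \<le> k" "2 * k + a - b < 0" "0 \<le> l" using that by (auto simp: I4m_def N0_def)
    moreover assume "lam_type 4 k a b = lam_type 3 l a b"
    ultimately show False unfolding lam_type_eq_iff by (simp add: d_type_def)
  qed
  then show ?thesis unfolding sigma_of_def by blast
qed

section \<open>Integral difference a - b\<close>

lemma all_less_sum_ne_iff: "(\<forall>k<n. int k + int n + 1 \<noteq> m) \<longleftrightarrow> 2 * int n < m \<or> m \<le> int n"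
proof
  assume "\<forall>k<n. int k + int n + 1 \<noteq> m"
  moreover have "\<exists>k<n. int k + int n + 1 = m" if "m \<le> 2 * int n" "int n < m"
    using that by (intro exI[of _ "nat (m - int n - 1)"]) auto
  ultimately show "2 * int n < m \<or> m \<le> int n" by force
qed auto

lemma I3m_I3p_disjoint: "I3m a b \<inter> I3p a b = {}"
  by (auto simp: I3m_def I3p_def N0_def)

lemma I4m_I4p_disjoint: "I4m a b \<inter> I4p a b = {}"
  by (auto simp: I4m_def I4p_def N0_def)

lemma I3m_empty: "a \<le> b \<Longrightarrow> I3m a b = {}"
  by (auto simp: I3m_def N0_def)

lemma I4m_empty: "b \<le> a \<Longrightarrow> I4m a b = {}"
  by (auto simp: I4m_def N0_def)

lemma sigma_of_Un: "sigma_of i (I \<union> J) a b = sigma_of i I a b \<union> sigma_of i J a b"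
  by (simp add: sigma_of_def image_Un)

lemma sigma_of_mono: "I \<subseteq> J \<Longrightarrow> sigma_of i I a b \<subseteq> sigma_of i J a b"
  by (auto simp: sigma_of_def)

lemma inj_on_image_eq_singleton:
  assumes "inj_on f A" "f ` A = {i}"
  shows "\<exists>x. A = {x} \<and> f x = i"
proof -
  obtain x where "x \<in> A" "f x = i" using assms(2) by (metis imageE insertI1)
  moreover have "y = x" if "y \<in> A" for y
    using that calculation assms by (auto dest: inj_onD)
  ultimately show ?thesis by blast
qed

lemma inj_on_image_eq_doubleton:
  assumes "inj_on f A" "f ` A = {i, j}" "i \<noteq> j"
  shows "\<exists>x y. A = {x, y} \<and> x \<noteq> y \<and> f x = i \<and> f y = j"
proof -
  obtain x y where "x \<in> A" "f x = i" "y \<in> A" "f y = j" using assms(2) by (metis imageE insertI1 insertI2)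
  moreover have "z = x \<or> z = y" if "z \<in> A" for z
    using that calculation assms by (auto dest: inj_onD)
  ultimately show ?thesis using assms(3) by blast
qed

locale integral_exponent_difference =
  fixes a b :: real and m :: int
  assumes a_notin_Ints: "a \<notin> \<int>" and b_notin_Ints: "b \<notin> \<int>"
    and a_plus_b_notin_Ints: "a + b \<notin> \<int>" and a_minus_b: "a - b = of_int m"
begin

lemma a_eq: "a = b + of_int m"
  using a_minus_b by simp

lemma I3m_eq: "I3m a b = {real n |n. 2 * int n < m}"
proof -
  have "2 * real n - a + b = of_int (2 * int n - m)" for n by (simp add: a_eq)
  then show ?thesis by (auto simp: I3m_def N0_def)
qed

lemma I3p_eq: "I3p a b = {real n |n. m \<le> int n}"
proof -
  have "real n - a + b = of_int (int n - m)" for n by (simp add: a_eq)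
  then show ?thesis by (auto simp: I3p_def N0_def)
qed

lemma I4m_eq: "I4m a b = {real n |n. 2 * int n < - m}"
proof -
  have "2 * real n + a - b = of_int (2 * int n + m)" for n by (simp add: a_eq)
  then show ?thesis by (auto simp: I4m_def N0_def)
qed

lemma I4p_eq: "I4p a b = {real n |n. - m \<le> int n}"
proof -
  have "real n + a - b = of_int (int n + m)" for n by (simp add: a_eq)
  then show ?thesis by (auto simp: I4p_def N0_def)
qed

lemma index_set_1: "index_set 1 a b = N0"
proof -
  have "real k + real n + a + b + 2 * d_type 1 a b + 1 \<noteq> 0" for k n
  proof
    assume "real k + real n + a + b + 2 * d_type 1 a b + 1 = 0"
    then have "a + b = of_int (- int k - int n - 1)" by (simp add: d_type_def algebra_simps)
    then show False using a_plus_b_notin_Ints by simp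
  qed
  moreover have "index_set 1 a b = {real n |n. \<forall>k<n. real k + real n + a + b + 2 * d_type 1 a b + 1 \<noteq> 0}"
    by (rule index_set_char[OF a_notin_Ints b_notin_Ints]) simp
  ultimately show ?thesis unfolding N0_def by blast
qed

lemma index_set_2: "index_set 2 a b = N0"
proof -
  have "real k + real n + a + b + 2 * d_type 2 a b + 1 \<noteq> 0" for k n
  proof
    assume "real k + real n + a + b + 2 * d_type 2 a b + 1 = 0"
    then have "a + b = of_int (int k + int n + 1)" by (simp add: d_type_def algebra_simps)
    then show False using a_plus_b_notin_Ints by simp
  qed
  moreover have "index_set 2 a b = {real n |n. \<forall>k<n. real k + real n + a + b + 2 * d_type 2 a b + 1 \<noteq> 0}"
    by (rule index_set_char[OF a_notin_Ints b_notin_Ints]) simp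
  ultimately show ?thesis unfolding N0_def by blast
qed

lemma index_set_3: "index_set 3 a b = I3m a b \<union> I3p a b"
proof -
  have "real k + real n + a + b + 2 * d_type 3 a b + 1 = 0 \<longleftrightarrow> int k + int n + 1 = m" for k n
  proof -
    have e: "real k + real n + a + b + 2 * d_type 3 a b + 1 = of_int (int k + int n + 1 - m)"
      by (simp add: d_type_def a_eq)
    show ?thesis unfolding e of_int_eq_0_iff by linarith
  qed
  moreover have "index_set 3 a b = {real n |n. \<forall>k<n. real k + real n + a + b + 2 * d_type 3 a b + 1 \<noteq> 0}"
    by (rule index_set_char[OF a_notin_Ints b_notin_Ints]) simp
  ultimately show ?thesis by (simp add: all_less_sum_ne_iff I3m_eq I3p_eq) blast
qed

lemma index_set_4: "index_set 4 a b = I4m a b \<union> I4p a b"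
proof -
  have "real k + real n + a + b + 2 * d_type 4 a b + 1 = 0 \<longleftrightarrow> int k + int n + 1 = - m" for k n
  proof -
    have e: "real k + real n + a + b + 2 * d_type 4 a b + 1 = of_int (int k + int n + 1 + m)"
      by (simp add: d_type_def a_eq)
    show ?thesis unfolding e of_int_eq_0_iff by linarith
  qed
  moreover have "index_set 4 a b = {real n |n. \<forall>k<n. real k + real n + a + b + 2 * d_type 4 a b + 1 \<noteq> 0}"
    by (rule index_set_char[OF a_notin_Ints b_notin_Ints]) simp
  ultimately show ?thesis by (simp add: all_less_sum_ne_iff I4m_eq I4p_eq) blast
qed

lemma sigma_type_subset: "i \<in> {1, 2, 3, 4} \<Longrightarrow> sigma_type i a b \<subseteq> sigma_of i N0 a b"
  unfolding sigma_type_def by (rule sigma_of_mono) (auto simp: index_set_char[OF a_notin_Ints b_notin_Ints] N0_def)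

lemma sigma_type_disjoint:
  assumes "i \<in> {1, 2, 3, 4}" "j \<in> {1, 2, 3, 4}" "i \<noteq> j" "i \<in> {1, 2} \<or> j \<in> {1, 2}"
  shows "sigma_type i a b \<inter> sigma_type j a b = {}"
  using sigma_of_N0_disjoint[OF a_notin_Ints b_notin_Ints a_plus_b_notin_Ints assms]
    sigma_type_subset[OF assms(1)] sigma_type_subset[OF assms(2)] by blast

lemma sigma_type_3: "sigma_type 3 a b = sigma_of 3 (I3m a b) a b \<union> sigma_of 3 (I3p a b) a b"
  by (simp add: sigma_type_def index_set_3 sigma_of_Un)

lemma sigma_type_4: "sigma_type 4 a b = sigma_of 4 (I4m a b) a b \<union> sigma_of 4 (I4p a b) a b"
  by (simp add: sigma_type_def index_set_4 sigma_of_Un)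

text \<open>The shift k \<mapsto> k - (a - b) maps I3p onto I4p and preserves the eigenvalue.\<close>
lemma sigma_3p_eq_sigma_4p: "sigma_of 3 (I3p a b) a b = sigma_of 4 (I4p a b) a b"
proof -
  have shift: "(\<lambda>k. k - (a - b)) ` I3p a b = I4p a b"
  proof (intro equalityI subsetI)
    fix x assume "x \<in> (\<lambda>k. k - (a - b)) ` I3p a b"
    then obtain n where n: "m \<le> int n" "x = real n - of_int m" unfolding I3p_eq a_minus_b by blast
    then have "x = real (nat (int n - m))" by simp
    then show "x \<in> I4p a b" using n(1) unfolding I4p_eq by (auto intro!: exI[of _ "nat (int n - m)"])
  next
    fix x assume "x \<in> I4p a b"
    then obtain n where n: "- m \<le> int n" "x = real n" unfolding I4p_eq by blast
    then have "x = real (nat (int n + m)) - (a - b)" "m \<le> int (nat (int n + m))"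
      by (simp_all add: a_minus_b)
    then show "x \<in> (\<lambda>k. k - (a - b)) ` I3p a b" unfolding I3p_eq by blast
  qed
  have "lam_type 3 k a b = lam_type 4 (k - (a - b)) a b" for k
    by (simp add: lam_type_def algebra_simps)
  then have "sigma_of 3 (I3p a b) a b = (\<lambda>k. lam_type 4 (k - (a - b)) a b) ` I3p a b"
    unfolding sigma_of_def by simp
  also have "\<dots> = sigma_of 4 (I4p a b) a b"
    unfolding sigma_of_def shift[symmetric] image_image ..
  finally show ?thesis .
qed

lemma asym_types_sigma_1: "lam \<in> sigma_type 1 a b \<Longrightarrow> asym_type ` Ric a b lam = {1}"
  using sigma_type_disjoint[of 1 2] sigma_type_disjoint[of 1 3] sigma_type_disjoint[of 1 4]
  by (auto simp: asym_type_image_Ric[OF a_notin_Ints b_notin_Ints])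

lemma asym_types_sigma_2: "lam \<in> sigma_type 2 a b \<Longrightarrow> asym_type ` Ric a b lam = {2}"
  using sigma_type_disjoint[of 2 1] sigma_type_disjoint[of 2 3] sigma_type_disjoint[of 2 4]
  by (auto simp: asym_type_image_Ric[OF a_notin_Ints b_notin_Ints])

lemma asym_types_sigma_3m: "lam \<in> sigma_of 3 (I3m a b) a b \<Longrightarrow> asym_type ` Ric a b lam = {3}"
  using sigma_type_disjoint[of 3 1] sigma_type_disjoint[of 3 2] sigma_type_3
    sigma_of_I3m_disjoint[of a b] sigma_type_subset[of 4]
  by (auto simp: asym_type_image_Ric[OF a_notin_Ints b_notin_Ints])

lemma asym_types_sigma_4m: "lam \<in> sigma_of 4 (I4m a b) a b \<Longrightarrow> asym_type ` Ric a b lam = {4}"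
  using sigma_type_disjoint[of 4 1] sigma_type_disjoint[of 4 2] sigma_type_4
    sigma_of_I4m_disjoint[of a b] sigma_type_subset[of 3]
  by (auto simp: asym_type_image_Ric[OF a_notin_Ints b_notin_Ints])

lemma asym_types_sigma_3p: "lam \<in> sigma_of 3 (I3p a b) a b \<Longrightarrow> asym_type ` Ric a b lam = {3, 4}"
  using sigma_type_disjoint[of 3 1] sigma_type_disjoint[of 3 2] sigma_type_3 sigma_type_4
    sigma_3p_eq_sigma_4p
  by (auto simp: asym_type_image_Ric[OF a_notin_Ints b_notin_Ints])

lemma sigma_qr_eq: "sigma_qr a b = sigma_type 1 a b \<union> sigma_type 2 a b \<union> sigma_of 3 (I3m a b) a b
    \<union> sigma_of 4 (I4m a b) a b \<union> sigma_of 3 (I3p a b) a b"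
  using sigma_qr_eq_Un[OF a_notin_Ints b_notin_Ints] sigma_type_3 sigma_type_4 sigma_3p_eq_sigma_4p
  by auto

lemma sigma_pieces_disjoint:
  shows "sigma_type 1 a b \<inter> sigma_type 2 a b = {}"
    and "sigma_type 1 a b \<inter> sigma_of 3 (I3m a b) a b = {}"
    and "sigma_type 1 a b \<inter> sigma_of 4 (I4m a b) a b = {}"
    and "sigma_type 1 a b \<inter> sigma_of 3 (I3p a b) a b = {}"
    and "sigma_type 2 a b \<inter> sigma_of 3 (I3m a b) a b = {}"
    and "sigma_type 2 a b \<inter> sigma_of 4 (I4m a b) a b = {}"
    and "sigma_type 2 a b \<inter> sigma_of 3 (I3p a b) a b = {}"
    and "sigma_of 3 (I3m a b) a b \<inter> sigma_of 3 (I3p a b) a b = {}"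
    and "sigma_of 4 (I4m a b) a b \<inter> sigma_of 3 (I3p a b) a b = {}"
  by (fastforce dest: asym_types_sigma_1 asym_types_sigma_2 asym_types_sigma_3m asym_types_sigma_4m
      asym_types_sigma_3p)+

end

theorem mainTheorem17:
  fixes a b :: real
  assumes "a \<notin> \<int>" and "b \<notin> \<int>" and "a + b \<notin> \<int>" and "a - b \<in> \<int>"
  shows
    "index_set 1 a b = N0 \<and> index_set 2 a b = N0
     \<and> index_set 3 a b = I3m a b \<union> I3p a b \<and> I3m a b \<inter> I3p a b = {}
     \<and> index_set 4 a b = I4m a b \<union> I4p a b \<and> I4m a b \<inter> I4p a b = {}
     \<and> (\<forall>lam \<in> sigma_type 1 a b. \<exists>w. Ric a b lam = {w} \<and> asym_type w = 1)
     \<and> (\<forall>lam \<in> sigma_type 2 a b. \<exists>w. Ric a b lam = {w} \<and> asym_type w = 2)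
     \<and> (\<forall>lam \<in> sigma_of 3 (I3m a b) a b. \<exists>w. Ric a b lam = {w} \<and> asym_type w = 3)
     \<and> (\<forall>lam \<in> sigma_of 4 (I4m a b) a b. \<exists>w. Ric a b lam = {w} \<and> asym_type w = 4)
     \<and> sigma_of 3 (I3p a b) a b = sigma_of 4 (I4p a b) a b
     \<and> (\<forall>lam \<in> sigma_of 3 (I3p a b) a b. \<exists>w3 w4. Ric a b lam = {w3, w4} \<and> w3 \<noteq> w4
            \<and> asym_type w3 = 3 \<and> asym_type w4 = 4)
     \<and> (a \<ge> b \<longrightarrow>
          sigma_qr a b = sigma_type 1 a b \<union> sigma_type 2 a b \<union> sigma_of 3 (I3m a b) a b
                          \<union> sigma_of 3 (I3p a b) a b
        \<and> sigma_type 1 a b \<inter> sigma_type 2 a b = {}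
        \<and> sigma_type 1 a b \<inter> sigma_of 3 (I3m a b) a b = {}
        \<and> sigma_type 1 a b \<inter> sigma_of 3 (I3p a b) a b = {}
        \<and> sigma_type 2 a b \<inter> sigma_of 3 (I3m a b) a b = {}
        \<and> sigma_type 2 a b \<inter> sigma_of 3 (I3p a b) a b = {}
        \<and> sigma_of 3 (I3m a b) a b \<inter> sigma_of 3 (I3p a b) a b = {})
     \<and> (b \<ge> a \<longrightarrow>
          sigma_qr a b = sigma_type 1 a b \<union> sigma_type 2 a b \<union> sigma_of 4 (I4m a b) a b
                          \<union> sigma_of 3 (I3p a b) a b
        \<and> sigma_type 1 a b \<inter> sigma_type 2 a b = {}
        \<and> sigma_type 1 a b \<inter> sigma_of 4 (I4m a b) a b = {}
        \<and> sigma_type 1 a b \<inter> sigma_of 3 (I3p a b) a b = {}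
        \<and> sigma_type 2 a b \<inter> sigma_of 4 (I4m a b) a b = {}
        \<and> sigma_type 2 a b \<inter> sigma_of 3 (I3p a b) a b = {}
        \<and> sigma_of 4 (I4m a b) a b \<inter> sigma_of 3 (I3p a b) a b = {})"
proof -
  obtain m where "a - b = of_int m" using assms(4) by (elim Ints_cases)
  then interpret integral_exponent_difference a b m using assms by unfold_locales
  have simple: "\<forall>lam \<in> S. \<exists>w. Ric a b lam = {w} \<and> asym_type w = i"
    if "\<And>lam. lam \<in> S \<Longrightarrow> asym_type ` Ric a b lam = {i}" for S i
    using that inj_on_image_eq_singleton[OF inj_on_asym_type_Ric[OF assms(1)]] by blast
  have degenerate: "\<forall>lam \<in> sigma_of 3 (I3p a b) a b. \<exists>w3 w4. Ric a b lam = {w3, w4} \<and> w3 \<noteq> w4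
      \<and> asym_type w3 = 3 \<and> asym_type w4 = 4"
    using asym_types_sigma_3p inj_on_image_eq_doubleton[OF inj_on_asym_type_Ric[OF assms(1)]] by simp
  have "b \<le> a \<Longrightarrow> sigma_of 4 (I4m a b) a b = {}" "a \<le> b \<Longrightarrow> sigma_of 3 (I3m a b) a b = {}"
    by (simp_all add: I3m_empty I4m_empty sigma_of_def)
  then show ?thesis
    using index_set_1 index_set_2 index_set_3 index_set_4 I3m_I3p_disjoint I4m_I4p_disjoint
      simple[OF asym_types_sigma_1] simple[OF asym_types_sigma_2] simple[OF asym_types_sigma_3m]
      simple[OF asym_types_sigma_4m] sigma_3p_eq_sigma_4p degenerate sigma_qr_eq sigma_pieces_disjoint
    by (auto simp: Int_commute)
qed

end
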